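(* Let $\Phi_M,\Phi_N$ be measurement channels corresponding to two $2$-outcome qubit POVMs ($d=2$) $M=\{M_0,M_1\}$ and $N=\{N_0,N_1\}$ with $M_1\neq N_1$. The pair $\Phi_M,\Phi_N$ is a Maximal Entanglement Worst Case pair if and only if $\det(M_0-N_0)=0$.
   Context: The measurement channel of a POVM $M$ is $\Phi_M(\rho)=\sum_i\operatorname{Tr}(\rho M_i)\,|i\rangle\langle i|$. With $\Delta_\Phi=\Phi_M-\Phi_N$, Choi operator $J(\mathcal{S})=\sum_{ij}\mathcal{S}(|i\rangle\langle j|)\otimes|i\rangle\langle j|$, ME-norm $\|\mathcal{S}\|_{\mathrm{ME}}=\|J(\mathcal{S})/d\|_1$ and diamond norm $\|\mathcal{S}\|_\diamond=\max_{\rho_{AA'}}\|(\mathcal{S}\otimes I_{A'})\rho_{AA'}\|_1$, the pair is called Maximal Entanglement Worst Case (MEWC) if $\|\Delta_\Phi\|_\diamond=d\|\Delta_\Phi\|_{\mathrm{ME}}$, i.e. a maximally entangled input is maximally suboptimal for discriminating the two channels with uniform priors. *)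

theory Defs
  imports "Jordan_Normal_Form.Schur_Decomposition" "HOL-Computational_Algebra.Polynomial"
begin

definition msum :: "nat \<Rightarrow> nat \<Rightarrow> ('i \<Rightarrow> complex mat) \<Rightarrow> 'i set \<Rightarrow> complex mat" where
  "msum n m f I = mat n m (\<lambda>(r,c). \<Sum>x\<in>I. f x $$ (r,c))"

text \<open>Kronecker (tensor) product; index (i,k) of A (x) B is i * dim B + k.\<close>
definition kron :: "complex mat \<Rightarrow> complex mat \<Rightarrow> complex mat" where
  "kron A B = mat (dim_row A * dim_row B) (dim_col A * dim_col B)
     (\<lambda>(i,j). A $$ (i div dim_row B, j div dim_col B) * B $$ (i mod dim_row B, j mod dim_col B))"

definition ketbra :: "nat \<Rightarrow> nat \<Rightarrow> nat \<Rightarrow> complex mat" where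
  "ketbra n i j = mat n n (\<lambda>(k,l). if k = i \<and> l = j then 1 else 0)"

definition trace :: "complex mat \<Rightarrow> complex" where
  "trace A = (\<Sum>i<dim_row A. A $$ (i,i))"

definition hermitian :: "complex mat \<Rightarrow> bool" where
  "hermitian A \<longleftrightarrow> mat_adjoint A = A"

definition psd :: "nat \<Rightarrow> complex mat \<Rightarrow> bool" where
  "psd n A \<longleftrightarrow> A \<in> carrier_mat n n \<and> hermitian A \<and>
     (\<forall>v \<in> carrier_vec n. 0 \<le> Re (\<Sum>i<n. cnj (v $ i) * (A *\<^sub>v v) $ i))"

definition density :: "nat \<Rightarrow> complex mat \<Rightarrow> bool" where
  "density n \<rho> \<longleftrightarrow> psd n \<rho> \<and> trace \<rho> = 1"

text \<open>Trace norm = sum of the singular values (square roots of the eigenvalues of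
  A^* A, counted with algebraic multiplicity).\<close>
definition trace_norm :: "complex mat \<Rightarrow> real" where
  "trace_norm A = (let p = char_poly (mat_adjoint A * A) in
     \<Sum>z\<in>{z. poly p z = 0}. real (order z p) * sqrt (Re z))"

text \<open>Linear maps are represented as functions on matrices; S maps din x din to dout x dout.\<close>

definition choi :: "(complex mat \<Rightarrow> complex mat) \<Rightarrow> nat \<Rightarrow> nat \<Rightarrow> complex mat" where
  "choi S din dout = msum (dout * din) (dout * din)
     (\<lambda>(i,j). kron (S (ketbra din i j)) (ketbra din i j)) ({..<din} \<times> {..<din})"

definition me_norm :: "(complex mat \<Rightarrow> complex mat) \<Rightarrow> nat \<Rightarrow> nat \<Rightarrow> real" where
  "me_norm S din dout = trace_norm ((1 / of_nat din) \<cdot>\<^sub>m choi S din dout)"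

text \<open>(S (x) id_{A'}) applied to rho on A (x) A', dim A = din, dim A' = k, extended linearly
  from the basis |i><j| (x) |a><b|.\<close>
definition tensor_id :: "(complex mat \<Rightarrow> complex mat) \<Rightarrow> nat \<Rightarrow> nat \<Rightarrow> nat \<Rightarrow> complex mat \<Rightarrow> complex mat" where
  "tensor_id S din dout k \<rho> = msum (dout * k) (dout * k)
     (\<lambda>((i,j),(a,b)). \<rho> $$ (i * k + a, j * k + b) \<cdot>\<^sub>m kron (S (ketbra din i j)) (ketbra k a b))
     (({..<din} \<times> {..<din}) \<times> ({..<k} \<times> {..<k}))"

text \<open>Diamond norm: maximum over states on A (x) A', with A' a copy of A.\<close>
definition diamond_norm :: "(complex mat \<Rightarrow> complex mat) \<Rightarrow> nat \<Rightarrow> nat \<Rightarrow> real" where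
  "diamond_norm S din dout =
     Sup {trace_norm (tensor_id S din dout din \<rho>) | \<rho>. density (din * din) \<rho>}"

definition is_povm :: "nat \<Rightarrow> nat \<Rightarrow> (nat \<Rightarrow> complex mat) \<Rightarrow> bool" where
  "is_povm d m M \<longleftrightarrow> (\<forall>i<m. psd d (M i)) \<and> msum d d M {..<m} = 1\<^sub>m d"

definition meas_channel :: "nat \<Rightarrow> (nat \<Rightarrow> complex mat) \<Rightarrow> complex mat \<Rightarrow> complex mat" where
  "meas_channel m M \<rho> = msum m m (\<lambda>i. trace (\<rho> * M i) \<cdot>\<^sub>m ketbra m i i) {..<m}"

definition delta_channel :: "nat \<Rightarrow> (nat \<Rightarrow> complex mat) \<Rightarrow> (nat \<Rightarrow> complex mat) \<Rightarrow> complex mat \<Rightarrow> complex mat" where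
  "delta_channel m M N \<rho> = meas_channel m M \<rho> - meas_channel m N \<rho>"

definition MEWC :: "nat \<Rightarrow> nat \<Rightarrow> (nat \<Rightarrow> complex mat) \<Rightarrow> (nat \<Rightarrow> complex mat) \<Rightarrow> bool" where
  "MEWC d m M N \<longleftrightarrow>
     diamond_norm (delta_channel m M N) d m = real d * me_norm (delta_channel m M N) d m"

end

(* Let D = M_0 - N_0, a Hermitian 2x2 matrix. The difference channel maps |i><j| to
   D_ji diag(1, -1), so (Delta (x) id)(rho) is block diagonal with blocks Y and -Y, where
   Y = Tr_A (rho (D (x) 1)), and its trace norm is 2 ||Y||_1. Writing D = P - Q with P, Q >= 0
   and tr (P + Q) = 2 ||D||_op bounds ||Y||_1 by the operator norm ||D||_op, and a product
   state built from an eigenvector of D for its eigenvalue of largest modulus attains this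
   bound: the diamond norm is 2 ||D||_op. The normalised Choi operator is block diagonal with
   blocks D^T / 2 and -D^T / 2, so the ME-norm is ||D||_1 and the MEWC condition reads
   ||D||_op = ||D||_1, which holds exactly when one eigenvalue of D vanishes: det D = 0. *)

theory Submission
  imports Defs
begin

lemma sum_lessThan_2: "(\<Sum>i<(2::nat). f i) = f 0 + (f 1 :: 'a::comm_monoid_add)"
  by (simp add: numeral_eq_Suc lessThan_Suc add.commute)

lemma sum_lessThan_4: "(\<Sum>i<(4::nat). f i) = f 0 + f 1 + f 2 + (f 3 :: 'a::comm_monoid_add)"
  by (simp add: numeral_eq_Suc lessThan_Suc add.assoc add.commute add.left_commute)

lemma less_2_cases: "(i::nat) < 2 \<Longrightarrow> i = 0 \<or> i = 1"
  by auto

lemma less_4_cases: "(i::nat) < 4 \<Longrightarrow> i = 0 \<or> i = 1 \<or> i = 2 \<or> i = 3"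
  by auto

lemma dim_row_mat_adjoint [simp]: "dim_row (mat_adjoint A) = dim_col A"
  and dim_col_mat_adjoint [simp]: "dim_col (mat_adjoint A) = dim_row A"
  unfolding mat_adjoint_def by auto

lemma index_mat_adjoint [simp]:
  "i < dim_col A \<Longrightarrow> j < dim_row A \<Longrightarrow> mat_adjoint (A::complex mat) $$ (i,j) = cnj (A $$ (j,i))"
  unfolding mat_adjoint_def by (simp add: mat_of_rows_def col_def)

lemma hermitian_index:
  assumes "hermitian A" "A \<in> carrier_mat n n" "i < n" "j < n"
  shows "A $$ (j,i) = cnj (A $$ (i,j))"
  using assms index_mat_adjoint[of j A i] unfolding hermitian_def by auto

lemma hermitian_minus:
  assumes "A \<in> carrier_mat n n" "B \<in> carrier_mat n n" "hermitian A" "hermitian B"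
  shows "hermitian (A - B)"
  unfolding hermitian_def
proof (rule eq_matI)
  fix i j assume "i < dim_row (A - B)" "j < dim_col (A - B)"
  thus "mat_adjoint (A - B) $$ (i,j) = (A - B) $$ (i,j)"
    using assms hermitian_index[OF assms(3,1), of j i] hermitian_index[OF assms(4,2), of j i] by simp
qed (use assms in auto)

lemma cnj_mult_self: "cnj z * z = complex_of_real ((cmod z)^2)"
  by (metis complex_norm_square mult.commute of_real_power)

section \<open>2x2 matrices\<close>

lemma det_2x2:
  assumes "(A :: 'a :: comm_ring_1 mat) \<in> carrier_mat 2 2"
  shows "det A = A$$(0,0) * A$$(1,1) - A$$(0,1) * A$$(1,0)"
proof -
  have "det A = (\<Sum>i<2. A $$ (i,0) * cofactor A i 0)"
    by (rule laplace_expansion_column[OF assms]) simp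
  also have "\<dots> = A$$(0,0) * A$$(1,1) - A$$(0,1) * A$$(1,0)"
    using assms unfolding cofactor_def by (simp add: numeral_2_eq_2 det_single mat_delete_def)
  finally show ?thesis .
qed

lemma char_poly_2x2:
  assumes "(A :: complex mat) \<in> carrier_mat 2 2"
  shows "char_poly A = [: det A, -(A$$(0,0) + A$$(1,1)), 1 :]"
  using assms unfolding char_poly_def
  by (simp add: det_2x2 char_poly_matrix_def numeral_2_eq_2 algebra_simps)

section \<open>Trace norm\<close>

lemma sum_order_roots_mult:
  fixes p q :: "'a::idom poly" and f :: "'a \<Rightarrow> real"
  assumes "p \<noteq> 0" "q \<noteq> 0"
  shows "(\<Sum>z\<in>{z. poly (p * q) z = 0}. real (order z (p * q)) * f z)
       = (\<Sum>z\<in>{z. poly p z = 0}. real (order z p) * f z) + (\<Sum>z\<in>{z. poly q z = 0}. real (order z q) * f z)"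
proof -
  let ?R = "{z. poly (p * q) z = 0}"
  have fin: "finite ?R" using assms by (simp add: poly_roots_finite)
  have extend: "(\<Sum>z\<in>{z. poly r z = 0}. real (order z r) * f z) = (\<Sum>z\<in>?R. real (order z r) * f z)"
    if "{z. poly r z = 0} \<subseteq> ?R" for r
    using that fin by (intro sum.mono_neutral_left) (auto simp: order_0I)
  have "(\<Sum>z\<in>?R. real (order z (p * q)) * f z)
      = (\<Sum>z\<in>?R. real (order z p) * f z) + (\<Sum>z\<in>?R. real (order z q) * f z)"
    using assms by (simp add: order_mult algebra_simps sum.distrib)
  also have "\<dots> = (\<Sum>z\<in>{z. poly p z = 0}. real (order z p) * f z) + (\<Sum>z\<in>{z. poly q z = 0}. real (order z q) * f z)"
    by (subst (1 2) extend) auto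
  finally show ?thesis .
qed

lemma sum_order_roots_linear:
  "(\<Sum>z\<in>{z. poly [:-r, 1:] z = 0}. real (order z [:-r, 1:]) * f z) = f r"
proof -
  have "{z. poly [:-r, 1:] z = 0} = {r}" by auto
  moreover have "order r [:-r, 1:] = 1" using order_power_n_n[of r 1] by simp
  ultimately show ?thesis by simp
qed

lemma char_poly_four_block_diag:
  assumes "(A :: complex mat) \<in> carrier_mat n n" "B \<in> carrier_mat m m"
  shows "char_poly (four_block_mat A (0\<^sub>m n m) (0\<^sub>m m n) B) = char_poly A * char_poly B"
proof -
  let ?cm = "\<lambda>A. [:0, 1:] \<cdot>\<^sub>m 1\<^sub>m (dim_row A) + map_mat (\<lambda>a. [:- a:]) A"
  have "?cm (four_block_mat A (0\<^sub>m n m) (0\<^sub>m m n) B) = four_block_mat (?cm A) (0\<^sub>m n m) (0\<^sub>m m n) (?cm B)"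
    using assms by (intro eq_matI) auto
  moreover have "det \<dots> = det (?cm A) * det (?cm B)"
    using assms by (intro det_four_block_mat_lower_left_zero) auto
  ultimately show ?thesis unfolding char_poly_defs by simp
qed

lemma mat_adjoint_four_block_diag:
  assumes "(A :: complex mat) \<in> carrier_mat n n" "B \<in> carrier_mat m m"
  shows "mat_adjoint (four_block_mat A (0\<^sub>m n m) (0\<^sub>m m n) B)
       = four_block_mat (mat_adjoint A) (0\<^sub>m n m) (0\<^sub>m m n) (mat_adjoint B)"
  using assms by (intro eq_matI) auto

lemma trace_norm_four_block_diag:
  assumes "(A :: complex mat) \<in> carrier_mat n n" "B \<in> carrier_mat m m"
  shows "trace_norm (four_block_mat A (0\<^sub>m n m) (0\<^sub>m m n) B) = trace_norm A + trace_norm B"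
proof -
  have AA: "mat_adjoint A * A \<in> carrier_mat n n" and BB: "mat_adjoint B * B \<in> carrier_mat m m"
    using assms by auto
  have prod: "mat_adjoint (four_block_mat A (0\<^sub>m n m) (0\<^sub>m m n) B) * four_block_mat A (0\<^sub>m n m) (0\<^sub>m m n) B
      = four_block_mat (mat_adjoint A * A) (0\<^sub>m n m) (0\<^sub>m m n) (mat_adjoint B * B)"
    using assms unfolding mat_adjoint_four_block_diag[OF assms]
    by (subst mult_four_block_mat[of _ n n _ m _ m _ _ n _ m]) auto
  have "char_poly (mat_adjoint A * A) \<noteq> 0" "char_poly (mat_adjoint B * B) \<noteq> 0"
    using degree_monic_char_poly[OF AA] degree_monic_char_poly[OF BB] by auto
  thus ?thesis
    unfolding trace_norm_def Let_def prod char_poly_four_block_diag[OF AA BB]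
    by (rule sum_order_roots_mult)
qed

lemma trace_norm_uminus: "trace_norm (- A) = trace_norm A"
proof -
  have "mat_adjoint (- A) * (- A) = mat_adjoint A * A"
    by (intro eq_matI) (auto simp: scalar_prod_def sum_negf)
  thus ?thesis unfolding trace_norm_def by simp
qed

lemma nonneg_roots_of_real_quadratic:
  fixes t \<delta> :: real
  assumes "0 \<le> \<delta>" "4 * \<delta> \<le> t^2" "0 \<le> t"
  obtains r1 r2 where "0 \<le> r1" "0 \<le> r2" "r1 + r2 = t" "r1 * r2 = \<delta>"
proof -
  define s where "s = sqrt (t^2 - 4 * \<delta>)"
  have s: "0 \<le> s" "s^2 = t^2 - 4 * \<delta>" using assms(2) unfolding s_def by auto
  have "s^2 \<le> t^2" using s(2) assms(1) by simp
  hence "s \<le> t" using s(1) assms(3) by (simp add: power2_le_iff_abs_le)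
  show ?thesis
    by (rule that[of "(t + s) / 2" "(t - s) / 2"])
       (use s \<open>s \<le> t\<close> in \<open>auto simp: field_simps power2_eq_square\<close>)
qed

lemma sqrt_add_sqrt:
  assumes "0 \<le> x" "0 \<le> y"
  shows "sqrt x + sqrt y = sqrt (x + y + 2 * sqrt (x * y))"
proof (rule real_sqrt_unique[symmetric])
  show "(sqrt x + sqrt y)^2 = x + y + 2 * sqrt (x * y)"
    using assms by (simp add: power2_eq_square algebra_simps real_sqrt_mult)
qed (use assms in simp)

lemma two_cmod_det_2x2_le:
  "2 * cmod (a * d - b * c) \<le> (cmod a)^2 + (cmod b)^2 + (cmod c)^2 + (cmod d)^2"
proof -
  have "cmod (a * d - b * c) \<le> cmod a * cmod d + cmod b * cmod c"
    by (metis norm_mult norm_triangle_ineq4)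
  moreover have "2 * (cmod a * cmod d) \<le> (cmod a)^2 + (cmod d)^2"
    "2 * (cmod b * cmod c) \<le> (cmod b)^2 + (cmod c)^2"
    using sum_squares_bound[of "cmod a" "cmod d"] sum_squares_bound[of "cmod b" "cmod c"]
    by (simp_all add: power2_eq_square)
  ultimately show ?thesis by linarith
qed

lemma trace_norm_2x2:
  assumes A: "A \<in> carrier_mat 2 2"
  shows "trace_norm A = sqrt ((cmod (A$$(0,0)))^2 + (cmod (A$$(0,1)))^2 + (cmod (A$$(1,0)))^2
    + (cmod (A$$(1,1)))^2 + 2 * cmod (det A))"
    (is "_ = sqrt (?t + 2 * cmod (det A))")
proof -
  define G where "G = mat_adjoint A * A"
  have G: "G \<in> carrier_mat 2 2" using A unfolding G_def by auto
  have "G$$(0,0) + G$$(1,1) = of_real ?t"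
    using A unfolding G_def by (simp add: scalar_prod_def sum_lessThan_2 cnj_mult_self atLeast0LessThan)
  moreover have "det G = of_real ((cmod (det A))^2)"
  proof -
    have "det G = cnj (det A) * det A"
      using A unfolding det_2x2[OF G] det_2x2[OF A]
      by (simp add: G_def scalar_prod_def sum_lessThan_2 atLeast0LessThan algebra_simps)
    thus ?thesis by (simp add: cnj_mult_self)
  qed
  ultimately have cp: "char_poly G = [: of_real ((cmod (det A))^2), - of_real ?t, 1 :]"
    unfolding char_poly_2x2[OF G] by simp
  have "(2 * cmod (det A))^2 \<le> ?t^2"
    using two_cmod_det_2x2_le det_2x2[OF A] by (intro power_mono) auto
  hence disc: "4 * (cmod (det A))^2 \<le> ?t^2" by (simp add: power_mult_distrib)
  obtain r1 r2 where r: "0 \<le> r1" "0 \<le> r2" "r1 + r2 = ?t" "r1 * r2 = (cmod (det A))^2"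
    by (rule nonneg_roots_of_real_quadratic[OF _ disc]) auto
  have fac: "char_poly G = [:- of_real r1, 1:] * [:- of_real r2, 1:]"
    unfolding cp r(3,4)[symmetric] by (simp add: algebra_simps)
  have "trace_norm A = sqrt r1 + sqrt r2"
    unfolding trace_norm_def Let_def G_def[symmetric] fac
    by (subst sum_order_roots_mult) (auto simp: sum_order_roots_linear)
  also have "\<dots> = sqrt (?t + 2 * cmod (det A))"
    using r by (simp add: sqrt_add_sqrt)
  finally show ?thesis .
qed

section \<open>Positive semidefinite 2x2 matrices\<close>

definition psd2x2 :: "complex mat \<Rightarrow> bool" where
  "psd2x2 A \<longleftrightarrow> (\<exists>a b. A$$(0,0) = of_real a \<and> A$$(1,1) = of_real b \<and> A$$(1,0) = cnj (A$$(0,1))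
     \<and> 0 \<le> a \<and> 0 \<le> b \<and> (cmod (A$$(0,1)))^2 \<le> a * b)"

definition herm2 :: "real \<Rightarrow> real \<Rightarrow> complex \<Rightarrow> complex mat" where
  "herm2 a b c = mat 2 2 (\<lambda>(i,j). if i = 0 then (if j = 0 then of_real a else c) else (if j = 0 then cnj c else of_real b))"

lemma herm2_carrier [simp]: "herm2 a b c \<in> carrier_mat 2 2"
  and dim_row_herm2 [simp]: "dim_row (herm2 a b c) = 2"
  and dim_col_herm2 [simp]: "dim_col (herm2 a b c) = 2"
  and herm2_index [simp]: "herm2 a b c $$ (0,0) = of_real a" "herm2 a b c $$ (0,1) = c"
    "herm2 a b c $$ (1,0) = cnj c" "herm2 a b c $$ (1,1) = of_real b"
  unfolding herm2_def by auto

text \<open>The simplifier rewrites the index \<open>1 :: nat\<close> to \<open>Suc 0\<close>.\<close>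
lemmas herm2_index_Suc [simp] = herm2_index[unfolded One_nat_def]

lemma psd2x2_herm2: "psd2x2 (herm2 a b c) \<longleftrightarrow> 0 \<le> a \<and> 0 \<le> b \<and> (cmod c)^2 \<le> a * b"
  unfolding psd2x2_def by auto

lemma hermitian_2x2_eq_herm2:
  assumes "A \<in> carrier_mat 2 2" "hermitian A"
  shows "A = herm2 (Re (A$$(0,0))) (Re (A$$(1,1))) (A$$(0,1))"
proof (rule eq_matI)
  have "A$$(j,i) = cnj (A$$(i,j))" if "i < 2" "j < 2" for i j
    using hermitian_index[OF assms(2,1) that] .
  from this[of 0 0] this[of 1 1] this[of 0 1]
  show "A $$ (i,j) = herm2 (Re (A$$(0,0))) (Re (A$$(1,1))) (A$$(0,1)) $$ (i,j)"
    if "i < dim_row (herm2 (Re (A$$(0,0))) (Re (A$$(1,1))) (A$$(0,1)))"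
       "j < dim_col (herm2 (Re (A$$(0,0))) (Re (A$$(1,1))) (A$$(0,1)))" for i j
    using that less_2_cases[of i] less_2_cases[of j] by (auto simp: herm2_def complex_eq_iff)
qed (use assms in auto)

definition qform2 :: "complex mat \<Rightarrow> complex \<Rightarrow> complex \<Rightarrow> complex" where
  "qform2 H v0 v1 = cnj v0 * H$$(0,0) * v0 + cnj v0 * H$$(0,1) * v1 + cnj v1 * H$$(1,0) * v0 + cnj v1 * H$$(1,1) * v1"

lemma two_mult_le_of_sq_le_mult:
  fixes u v a1 a2 b1 b2 :: real
  assumes "0 \<le> a1" "0 \<le> a2" "0 \<le> b1" "0 \<le> b2" "u^2 \<le> a1 * a2" "v^2 \<le> b1 * b2"
  shows "2 * u * v \<le> a1 * b1 + a2 * b2"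
proof -
  have "(2 * u * v)^2 = 4 * u^2 * v^2" by (simp add: power_mult_distrib)
  also have "\<dots> \<le> 4 * (a1 * a2) * (b1 * b2)" using assms by (intro mult_mono) auto
  also have "\<dots> \<le> (a1 * b1 + a2 * b2)^2"
    using zero_le_power2[of "a1 * b1 - a2 * b2"] by (simp add: power2_eq_square algebra_simps)
  finally have "(2 * u * v)^2 \<le> (a1 * b1 + a2 * b2)^2" .
  moreover have "0 \<le> a1 * b1 + a2 * b2" using assms by simp
  ultimately show ?thesis by (rule power2_le_imp_le)
qed

lemma Re_cnj_mult_ge: "- (cmod p * cmod q) \<le> Re (cnj p * q)"
  using abs_Re_le_cmod[of "cnj p * q"] by (simp add: norm_mult)

lemma qform2_hermitian:
  assumes "H$$(0,0) = of_real a" "H$$(1,1) = of_real b" "H$$(1,0) = cnj (H$$(0,1))"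
  shows "qform2 H v0 v1 = of_real (a * (cmod v0)^2 + b * (cmod v1)^2 + 2 * Re (cnj v0 * H$$(0,1) * v1))"
proof -
  have diag: "cnj v * of_real r * v = of_real (r * (cmod v)^2)" for v r
    using cnj_mult_self[of v] by (simp add: ac_simps)
  have cross: "cnj v0 * H$$(0,1) * v1 + cnj v1 * H$$(1,0) * v0 = of_real (2 * Re (cnj v0 * H$$(0,1) * v1))"
    unfolding assms(3) complex_add_cnj[symmetric] by (simp add: ac_simps)
  have "qform2 H v0 v1 = (cnj v0 * H$$(0,0) * v0 + cnj v1 * H$$(1,1) * v1)
      + (cnj v0 * H$$(0,1) * v1 + cnj v1 * H$$(1,0) * v0)"
    unfolding qform2_def by (simp add: algebra_simps)
  thus ?thesis unfolding assms(1,2) diag cross by simp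
qed

lemma qform2_psd2x2:
  assumes "psd2x2 H"
  shows "Im (qform2 H v0 v1) = 0" "0 \<le> Re (qform2 H v0 v1)"
proof -
  obtain a b where H: "H$$(0,0) = of_real a" "H$$(1,1) = of_real b" "H$$(1,0) = cnj (H$$(0,1))"
    and ab: "0 \<le> a" "0 \<le> b" "(cmod (H$$(0,1)))^2 \<le> a * b"
    using assms unfolding psd2x2_def by blast
  show "Im (qform2 H v0 v1) = 0" unfolding qform2_hermitian[OF H] by simp
  have "2 * cmod (H$$(0,1)) * (cmod v0 * cmod v1) \<le> a * (cmod v0)^2 + b * (cmod v1)^2"
    using ab by (intro two_mult_le_of_sq_le_mult) (auto simp: power_mult_distrib)
  moreover have "- (cmod (H$$(0,1)) * (cmod v0 * cmod v1)) \<le> Re (cnj v0 * H$$(0,1) * v1)"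
    using Re_cnj_mult_ge[of v0 "H$$(0,1) * v1"] by (simp add: norm_mult ac_simps)
  ultimately show "0 \<le> Re (qform2 H v0 v1)"
    unfolding qform2_hermitian[OF H] Re_complex_of_real by linarith
qed

lemma psd2x2_of_qform:
  assumes real: "\<And>v0 v1. Im (qform2 H v0 v1) = 0" and nonneg: "\<And>v0 v1. 0 \<le> Re (qform2 H v0 v1)"
  shows "psd2x2 H"
proof -
  define a where "a = Re (H$$(0,0))"
  define b where "b = Re (H$$(1,1))"
  define h where "h = H$$(0,1)"
  have H: "H$$(0,0) = of_real a" "H$$(1,1) = of_real b"
    using real[of 1 0] real[of 0 1] unfolding a_def b_def qform2_def by (simp_all add: complex_eq_iff)
  txt \<open>Reality of the form at \<open>(1, 1)\<close> and \<open>(1, \<i>)\<close> forces hermiticity.\<close>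
  have "H$$(1,0) = cnj (H$$(0,1))"
    using real[of 1 1] real[of 1 \<i>] unfolding qform2_def H by (simp add: complex_eq_iff)
  note form = qform2_hermitian[OF H this, unfolded h_def[symmetric] Re_complex_of_real]
  have "0 \<le> a" "0 \<le> b" using nonneg[of 1 0] nonneg[of 0 1] unfolding form by simp_all
  moreover have "(cmod h)^2 \<le> a * b"
  proof (cases "a = 0 \<and> b = 0")
    case True
    have "Re (cnj 1 * h * (- cnj h)) = - ((cmod h)^2)"
      using cnj_mult_self[of h] by (simp add: ac_simps)
    thus ?thesis using True nonneg[of 1 "- cnj h"] unfolding form by simp
  next
    case False
    have "Re (cnj (- h) * h * of_real a) = - a * (cmod h)^2" "Re (cnj (of_real b) * h * (- cnj h)) = - b * (cmod h)^2"
      unfolding cmod_power2 by (simp_all add: power2_eq_square algebra_simps)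
    hence "0 \<le> a * (a * b - (cmod h)^2)" "0 \<le> b * (a * b - (cmod h)^2)"
      using nonneg[of "- h" "of_real a"] nonneg[of "of_real b" "- cnj h"]
      unfolding form by (simp_all add: power2_eq_square algebra_simps)
    thus ?thesis using False \<open>0 \<le> a\<close> \<open>0 \<le> b\<close> by (auto simp: zero_le_mult_iff)
  qed
  ultimately show ?thesis
    unfolding psd2x2_def using H \<open>H$$(1,0) = cnj (H$$(0,1))\<close> h_def by blast
qed

lemma trace_mult_psd2x2:
  assumes "psd2x2 R" "psd2x2 M"
  shows "Im (\<Sum>i<2. \<Sum>j<2. R$$(j,i) * M$$(i,j)) = 0" "0 \<le> Re (\<Sum>i<2. \<Sum>j<2. R$$(j,i) * M$$(i,j))"
proof -
  obtain a b where R: "R$$(0,0) = of_real a" "R$$(1,1) = of_real b" "R$$(1,0) = cnj (R$$(0,1))"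
    and ab: "0 \<le> a" "0 \<le> b" "(cmod (R$$(0,1)))^2 \<le> a * b"
    using assms(1) unfolding psd2x2_def by blast
  obtain a' b' where M: "M$$(0,0) = of_real a'" "M$$(1,1) = of_real b'" "M$$(1,0) = cnj (M$$(0,1))"
    and ab': "0 \<le> a'" "0 \<le> b'" "(cmod (M$$(0,1)))^2 \<le> a' * b'"
    using assms(2) unfolding psd2x2_def by blast
  define p where "p = R$$(0,1)"
  define q where "q = M$$(0,1)"
  have "(\<Sum>i<2. \<Sum>j<2. R$$(j,i) * M$$(i,j)) = of_real (a * a' + b * b') + (q * cnj p + cnj q * p)"
    unfolding sum_lessThan_2 R M p_def q_def by (simp add: algebra_simps)
  also have "q * cnj p + cnj q * p = of_real (2 * Re (cnj p * q))"
    unfolding complex_add_cnj[symmetric] by (simp add: ac_simps)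
  finally have sum: "(\<Sum>i<2. \<Sum>j<2. R$$(j,i) * M$$(i,j)) = of_real (a * a' + b * b' + 2 * Re (cnj p * q))"
    by simp
  show "Im (\<Sum>i<2. \<Sum>j<2. R$$(j,i) * M$$(i,j)) = 0" unfolding sum by simp
  have "2 * cmod p * cmod q \<le> a * a' + b * b'"
    using ab ab' unfolding p_def q_def by (intro two_mult_le_of_sq_le_mult) auto
  thus "0 \<le> Re (\<Sum>i<2. \<Sum>j<2. R$$(j,i) * M$$(i,j))"
    unfolding sum using Re_cnj_mult_ge[of p q] by simp
qed

lemma qform_psd:
  assumes "psd n \<rho>"
  shows "Im (\<Sum>k<n. \<Sum>l<n. cnj (w k) * \<rho>$$(k,l) * w l) = 0"
    "0 \<le> Re (\<Sum>k<n. \<Sum>l<n. cnj (w k) * \<rho>$$(k,l) * w l)"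
proof -
  have \<rho>: "\<rho> \<in> carrier_mat n n" "hermitian \<rho>" using assms unfolding psd_def by auto
  have "cnj (\<Sum>k<n. \<Sum>l<n. cnj (w k) * \<rho>$$(k,l) * w l) = (\<Sum>k<n. \<Sum>l<n. cnj (w l) * \<rho>$$(l,k) * w k)"
    unfolding cnj_sum
  proof (intro sum.cong refl)
    fix k l assume "k \<in> {..<n}" "l \<in> {..<n}"
    thus "cnj (cnj (w k) * \<rho>$$(k,l) * w l) = cnj (w l) * \<rho>$$(l,k) * w k"
      using hermitian_index[OF \<rho>(2,1), of k l] by simp
  qed
  also have "\<dots> = (\<Sum>k<n. \<Sum>l<n. cnj (w k) * \<rho>$$(k,l) * w l)"
    by (rule sum.swap)
  finally show "Im (\<Sum>k<n. \<Sum>l<n. cnj (w k) * \<rho>$$(k,l) * w l) = 0"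
    by (simp only: Reals_cnj_iff[symmetric] complex_is_Real_iff)
  have "(\<Sum>i<n. cnj (vec n w $ i) * (\<rho> *\<^sub>v vec n w) $ i) = (\<Sum>k<n. \<Sum>l<n. cnj (w k) * \<rho>$$(k,l) * w l)"
    using \<rho>(1) by (intro sum.cong refl) (simp add: scalar_prod_def sum_distrib_left mult.assoc atLeast0LessThan)
  moreover have "\<forall>v \<in> carrier_vec n. 0 \<le> Re (\<Sum>i<n. cnj (v $ i) * (\<rho> *\<^sub>v v) $ i)"
    using assms unfolding psd_def by blast
  hence "0 \<le> Re (\<Sum>i<n. cnj (vec n w $ i) * (\<rho> *\<^sub>v vec n w) $ i)"
    by (rule bspec) simp
  ultimately show "0 \<le> Re (\<Sum>k<n. \<Sum>l<n. cnj (w k) * \<rho>$$(k,l) * w l)" by simp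
qed

section \<open>Partial trace against a 2x2 matrix\<close>

text \<open>For \<open>\<rho>\<close> on \<open>C\<^sup>2 \<otimes> C\<^sup>2\<close> (index \<open>2 * i + a\<close> for \<open>|i\<rangle> \<otimes> |a\<rangle>\<close>),
  \<open>ptrace_mult \<rho> R\<close> is \<open>Tr\<^sub>A (\<rho> (R \<otimes> 1))\<close>.\<close>
definition ptrace_mult :: "complex mat \<Rightarrow> complex mat \<Rightarrow> complex mat" where
  "ptrace_mult \<rho> R = mat 2 2 (\<lambda>(a,b). \<Sum>i<2. \<Sum>j<2. R$$(j,i) * \<rho>$$(2*i+a, 2*j+b))"

lemma ptrace_mult_carrier [simp]: "ptrace_mult \<rho> R \<in> carrier_mat 2 2"
  and dim_row_ptrace_mult [simp]: "dim_row (ptrace_mult \<rho> R) = 2"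
  and dim_col_ptrace_mult [simp]: "dim_col (ptrace_mult \<rho> R) = 2"
  unfolding ptrace_mult_def by auto

lemma psd2x2_ptrace_mult:
  assumes \<rho>: "psd 4 \<rho>" and R: "psd2x2 R"
  shows "psd2x2 (ptrace_mult \<rho> R)"
proof (rule psd2x2_of_qform)
  fix v0 v1 :: complex
  txt \<open>The form of \<open>ptrace_mult \<rho> R\<close> at \<open>v\<close> is \<open>tr (R M)\<close>, where the form of \<open>M\<close>
    at \<open>c\<close> is the form of \<open>\<rho>\<close> at \<open>c \<otimes> v\<close>.\<close>
  define v where "v = (\<lambda>a::nat. if a = 0 then v0 else v1)"
  define M where "M = mat 2 2 (\<lambda>(i,j). \<Sum>a<2. \<Sum>b<2. cnj (v a) * v b * \<rho>$$(2*i+a, 2*j+b))"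
  have M: "psd2x2 M"
  proof (rule psd2x2_of_qform)
    fix c0 c1 :: complex
    define c where "c = (\<lambda>a::nat. if a = 0 then c0 else c1)"
    have q: "qform2 M c0 c1 = (\<Sum>k<4. \<Sum>l<4. cnj (c (k div 2) * v (k mod 2)) * \<rho>$$(k,l) * (c (l div 2) * v (l mod 2)))"
      unfolding qform2_def M_def
      by (simp add: sum_lessThan_4 sum_lessThan_2 c_def v_def) (simp add: algebra_simps)
    show "Im (qform2 M c0 c1) = 0" unfolding q by (rule qform_psd(1)[OF \<rho>])
    show "0 \<le> Re (qform2 M c0 c1)" unfolding q by (rule qform_psd(2)[OF \<rho>])
  qed
  have q: "qform2 (ptrace_mult \<rho> R) v0 v1 = (\<Sum>i<2. \<Sum>j<2. R$$(j,i) * M$$(i,j))"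
    unfolding qform2_def M_def ptrace_mult_def by (simp add: sum_lessThan_2 v_def algebra_simps)
  show "Im (qform2 (ptrace_mult \<rho> R) v0 v1) = 0" "0 \<le> Re (qform2 (ptrace_mult \<rho> R) v0 v1)"
    unfolding q by (rule trace_mult_psd2x2[OF R M])+
qed

lemma trace_norm_diff_psd2x2_le:
  assumes A: "psd2x2 A" "A \<in> carrier_mat 2 2" and B: "psd2x2 B" "B \<in> carrier_mat 2 2"
  shows "trace_norm (A - B) \<le> Re (A$$(0,0) + A$$(1,1) + B$$(0,0) + B$$(1,1))"
proof -
  obtain a1 a2 where A': "A$$(0,0) = of_real a1" "A$$(1,1) = of_real a2" "A$$(1,0) = cnj (A$$(0,1))"
    and a: "0 \<le> a1" "0 \<le> a2" "(cmod (A$$(0,1)))^2 \<le> a1 * a2"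
    using A(1) unfolding psd2x2_def by blast
  obtain b1 b2 where B': "B$$(0,0) = of_real b1" "B$$(1,1) = of_real b2" "B$$(1,0) = cnj (B$$(0,1))"
    and b: "0 \<le> b1" "0 \<le> b2" "(cmod (B$$(0,1)))^2 \<le> b1 * b2"
    using B(1) unfolding psd2x2_def by blast
  define x where "x = A$$(0,1)"
  define y where "y = B$$(0,1)"
  define p where "p = a1 - b1"
  define q where "q = a2 - b2"
  define e where "e = (cmod (x - y))^2"
  define S where "S = a1 + a2 + b1 + b2"
  have AB: "(A - B)$$(0,0) = of_real p" "(A - B)$$(1,1) = of_real q"
    "(A - B)$$(0,1) = x - y" "(A - B)$$(1,0) = cnj (x - y)"
    using A(2) B(2) unfolding p_def q_def x_def y_def by (simp_all add: A' B' flip: One_nat_def)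
  have "det (A - B) = of_real (p * q - e)"
    unfolding det_2x2[OF minus_carrier_mat[OF B(2)]] AB e_def of_real_diff of_real_mult complex_norm_square ..
  hence tn: "trace_norm (A - B) = sqrt (p^2 + 2 * e + q^2 + 2 * \<bar>p * q - e\<bar>)"
    unfolding trace_norm_2x2[OF minus_carrier_mat[OF B(2)]] AB e_def
    by (simp only: norm_of_real complex_mod_cnj power2_abs) simp
  have "e \<le> (a1 + b2) * (a2 + b1)"
  proof -
    have "e \<le> (cmod x + cmod y)^2"
      unfolding e_def using norm_triangle_ineq4[of x y] by (intro power_mono) auto
    also have "\<dots> = (cmod x)^2 + (cmod y)^2 + 2 * cmod x * cmod y" by (simp add: power2_eq_square algebra_simps)
    also have "\<dots> \<le> a1 * a2 + b1 * b2 + (a1 * b1 + a2 * b2)"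
      using a b two_mult_le_of_sq_le_mult[of a1 a2 b1 b2 "cmod x" "cmod y"] unfolding x_def y_def by simp
    also have "\<dots> = (a1 + b2) * (a2 + b1)" by (simp add: algebra_simps)
    finally show ?thesis .
  qed
  moreover have "\<bar>p + q\<bar> \<le> S" unfolding p_def q_def S_def using a b by simp
  hence "(p + q)^2 \<le> S^2" using power_mono[of "\<bar>p + q\<bar>" S 2] by simp
  moreover have "(p - q)^2 + 4 * ((a1 + b2) * (a2 + b1)) = S^2"
    unfolding p_def q_def S_def by (simp add: power2_eq_square algebra_simps)
  moreover have "p^2 + 2 * e + q^2 + 2 * \<bar>p * q - e\<bar> = (if e \<le> p * q then (p + q)^2 else (p - q)^2 + 4 * e)"
    by (simp add: abs_if power2_eq_square algebra_simps)
  ultimately have "p^2 + 2 * e + q^2 + 2 * \<bar>p * q - e\<bar> \<le> S^2"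
    by (simp split: if_split)
  hence "trace_norm (A - B) \<le> S"
    unfolding tn using a b unfolding S_def by (intro real_le_lsqrt) auto
  thus ?thesis unfolding S_def A' B' by simp
qed

lemma ptrace_mult_add:
  assumes "R \<in> carrier_mat 2 2" "S \<in> carrier_mat 2 2"
  shows "ptrace_mult \<rho> (R + S) = ptrace_mult \<rho> R + ptrace_mult \<rho> S"
  using assms by (intro eq_matI) (auto simp: ptrace_mult_def sum_lessThan_2 algebra_simps)

lemma ptrace_mult_diff:
  assumes "R \<in> carrier_mat 2 2" "S \<in> carrier_mat 2 2"
  shows "ptrace_mult \<rho> (R - S) = ptrace_mult \<rho> R - ptrace_mult \<rho> S"
  using assms by (intro eq_matI) (auto simp: ptrace_mult_def sum_lessThan_2 algebra_simps)

lemma trace_ptrace_mult_scalar: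
  assumes "\<rho> \<in> carrier_mat 4 4"
  shows "ptrace_mult \<rho> (herm2 L L 0) $$ (0,0) + ptrace_mult \<rho> (herm2 L L 0) $$ (1,1) = of_real L * trace \<rho>"
proof -
  have "dim_row \<rho> = 4" using assms by simp
  thus ?thesis unfolding ptrace_mult_def trace_def \<open>dim_row \<rho> = 4\<close> sum_lessThan_2 sum_lessThan_4
    by (simp add: algebra_simps numeral_3_eq_3 numeral_2_eq_2)
qed

section \<open>The spectral radius of a Hermitian 2x2 matrix\<close>

lemma abs_le_sqrt_square_add:
  fixes x y :: real
  assumes "0 \<le> y"
  shows "\<bar>x\<bar> \<le> sqrt (x^2 + y)"
  using real_sqrt_le_mono[of "x^2" "x^2 + y"] assms by simp

text \<open>\<open>spec_rad2 \<alpha> \<beta> \<bar>c\<bar>\<close> is the largest absolute value of an eigenvalue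
  \<open>(\<alpha> + \<beta> \<plusminus> sqrt ((\<alpha> - \<beta>)\<^sup>2 + 4 \<bar>c\<bar>\<^sup>2)) / 2\<close> of \<open>herm2 \<alpha> \<beta> c\<close>.\<close>
definition spec_rad2 :: "real \<Rightarrow> real \<Rightarrow> real \<Rightarrow> real" where
  "spec_rad2 \<alpha> \<beta> \<gamma> = (\<bar>\<alpha> + \<beta>\<bar> + sqrt ((\<alpha> - \<beta>)^2 + 4 * \<gamma>^2)) / 2"

lemma psd2x2_spec_rad2_shift:
  fixes \<alpha> \<beta> :: real and c :: complex
  defines "L \<equiv> spec_rad2 \<alpha> \<beta> (cmod c)"
  shows "psd2x2 (herm2 ((L + \<alpha>) / 2) ((L + \<beta>) / 2) (c / 2))"
    and "psd2x2 (herm2 ((L - \<alpha>) / 2) ((L - \<beta>) / 2) (- c / 2))"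
proof -
  define s where "s = sqrt ((\<alpha> - \<beta>)^2 + 4 * (cmod c)^2)"
  have s: "0 \<le> s" "s^2 = (\<alpha> - \<beta>)^2 + 4 * (cmod c)^2" unfolding s_def by simp_all
  have "\<bar>\<alpha> - \<beta>\<bar> \<le> s" unfolding s_def by (rule abs_le_sqrt_square_add) simp
  have L: "L = (\<bar>\<alpha> + \<beta>\<bar> + s) / 2" unfolding L_def spec_rad2_def s_def ..
  define lp where "lp = (\<alpha> + \<beta> + s) / 2"
  define lm where "lm = (\<alpha> + \<beta> - s) / 2"
  have "\<bar>lp\<bar> \<le> L" "\<bar>lm\<bar> \<le> L" unfolding L lp_def lm_def using s(1) by auto
  hence "0 \<le> (L + lp) * (L + lm)" "0 \<le> (L - lp) * (L - lm)" by (auto intro: mult_nonneg_nonneg)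
  moreover have "(L + \<alpha>) * (L + \<beta>) - (cmod c)^2 = (L + lp) * (L + lm)"
    "(L - \<alpha>) * (L - \<beta>) - (cmod c)^2 = (L - lp) * (L - lm)"
    unfolding lp_def lm_def using s(2) by (simp_all add: field_simps power2_eq_square)
  moreover have "0 \<le> L + \<alpha>" "0 \<le> L + \<beta>" "0 \<le> L - \<alpha>" "0 \<le> L - \<beta>"
    unfolding L using \<open>\<bar>\<alpha> - \<beta>\<bar> \<le> s\<close> by (auto simp: field_simps)
  ultimately show "psd2x2 (herm2 ((L + \<alpha>) / 2) ((L + \<beta>) / 2) (c / 2))"
    "psd2x2 (herm2 ((L - \<alpha>) / 2) ((L - \<beta>) / 2) (- c / 2))"
    unfolding psd2x2_herm2 by (auto simp: norm_divide power_divide)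
qed

lemma trace_norm_ptrace_mult_le_spec_rad2:
  assumes "density 4 \<rho>"
  shows "trace_norm (ptrace_mult \<rho> (herm2 \<alpha> \<beta> c)) \<le> spec_rad2 \<alpha> \<beta> (cmod c)"
proof -
  define L where "L = spec_rad2 \<alpha> \<beta> (cmod c)"
  define P where "P = herm2 ((L + \<alpha>) / 2) ((L + \<beta>) / 2) (c / 2)"
  define Q where "Q = herm2 ((L - \<alpha>) / 2) ((L - \<beta>) / 2) (- c / 2)"
  have \<rho>: "psd 4 \<rho>" "\<rho> \<in> carrier_mat 4 4" "trace \<rho> = 1"
    using assms unfolding density_def psd_def by auto
  have "herm2 \<alpha> \<beta> c = P - Q" "herm2 L L 0 = P + Q"
    unfolding P_def Q_def by (auto intro!: eq_matI simp: herm2_def field_simps)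
  hence diff: "ptrace_mult \<rho> (herm2 \<alpha> \<beta> c) = ptrace_mult \<rho> P - ptrace_mult \<rho> Q"
    and sum: "ptrace_mult \<rho> (herm2 L L 0) = ptrace_mult \<rho> P + ptrace_mult \<rho> Q"
    by (simp_all add: P_def Q_def ptrace_mult_diff ptrace_mult_add)
  have "trace_norm (ptrace_mult \<rho> (herm2 \<alpha> \<beta> c)) \<le> Re (ptrace_mult \<rho> P $$ (0,0) + ptrace_mult \<rho> P $$ (1,1)
      + ptrace_mult \<rho> Q $$ (0,0) + ptrace_mult \<rho> Q $$ (1,1))"
    unfolding diff using psd2x2_spec_rad2_shift[of \<alpha> \<beta> c]
    by (intro trace_norm_diff_psd2x2_le psd2x2_ptrace_mult[OF \<rho>(1)]) (simp_all add: P_def Q_def L_def)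
  also have "\<dots> = L"
    using trace_ptrace_mult_scalar[OF \<rho>(2), of L] \<rho>(3) unfolding sum by (simp add: algebra_simps)
  finally show ?thesis unfolding L_def .
qed

lemma density_kron_ketbra0:
  assumes R: "psd2x2 R" "R \<in> carrier_mat 2 2" and tr: "R$$(0,0) + R$$(1,1) = 1"
  shows "density 4 (kron R (ketbra 2 0 0))"
proof -
  define \<rho> where "\<rho> = kron R (ketbra 2 0 0)"
  have \<rho>_index: "\<rho> $$ (k,l) = (if even k \<and> even l then R $$ (k div 2, l div 2) else 0)" if "k < 4" "l < 4" for k l
    using R(2) that unfolding \<rho>_def kron_def ketbra_def by auto
  have c4: "\<rho> \<in> carrier_mat 4 4" using R(2) unfolding \<rho>_def kron_def ketbra_def by auto
  obtain a b where "R$$(0,0) = of_real a" "R$$(1,1) = of_real b" "R$$(1,0) = cnj (R$$(0,1))"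
    using R(1) unfolding psd2x2_def by blast
  hence "hermitian \<rho>"
    unfolding hermitian_def using c4
    by (intro eq_matI) (auto simp: \<rho>_index dest!: less_4_cases)
  moreover have "0 \<le> Re (\<Sum>i<4. cnj (v $ i) * (\<rho> *\<^sub>v v) $ i)" if "v \<in> carrier_vec 4" for v
  proof -
    have "(\<Sum>i<4. cnj (v $ i) * (\<rho> *\<^sub>v v) $ i) = qform2 R (v$0) (v$2)"
      using that c4 by (simp add: sum_lessThan_4 scalar_prod_def atLeast0LessThan \<rho>_index qform2_def algebra_simps)
    thus ?thesis using qform2_psd2x2[OF R(1)] by simp
  qed
  moreover have "trace \<rho> = 1"
    unfolding trace_def using c4 tr by (simp add: sum_lessThan_4 \<rho>_index)
  ultimately show ?thesis unfolding density_def psd_def \<rho>_def[symmetric] using c4 by auto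
qed

lemma trace_norm_ptrace_mult_kron_ketbra0:
  assumes "R \<in> carrier_mat 2 2"
  shows "trace_norm (ptrace_mult (kron R (ketbra 2 0 0)) D) = cmod (\<Sum>i<2. \<Sum>j<2. D$$(j,i) * R$$(i,j))"
proof -
  have "ptrace_mult (kron R (ketbra 2 0 0)) D $$ (0,0) = (\<Sum>i<2. \<Sum>j<2. D$$(j,i) * R$$(i,j))"
    "ptrace_mult (kron R (ketbra 2 0 0)) D $$ (0,1) = 0" "ptrace_mult (kron R (ketbra 2 0 0)) D $$ (1,0) = 0"
    "ptrace_mult (kron R (ketbra 2 0 0)) D $$ (1,1) = 0"
    using assms by (simp_all add: ptrace_mult_def kron_def ketbra_def sum_lessThan_2)
  thus ?thesis by (simp add: trace_norm_2x2 det_2x2)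
qed

lemma trace_norm_ptrace_mult_herm2_attains:
  assumes r: "0 \<le> r0" "0 \<le> r1" "r0 + r1 = 1" "(cmod w)^2 \<le> r0 * r1"
  shows "\<exists>\<rho>. density 4 \<rho> \<and> trace_norm (ptrace_mult \<rho> (herm2 \<alpha> \<beta> c)) = \<bar>\<alpha> * r0 + \<beta> * r1 + 2 * Re (cnj c * w)\<bar>"
proof (intro exI conjI)
  show "density 4 (kron (herm2 r0 r1 w) (ketbra 2 0 0))"
    using r by (intro density_kron_ketbra0) (auto simp: psd2x2_herm2 simp flip: of_real_add)
  have sum: "(\<Sum>i<2. \<Sum>j<2. herm2 \<alpha> \<beta> c $$ (j,i) * herm2 r0 r1 w $$ (i,j))
      = of_real (\<alpha> * r0 + \<beta> * r1 + 2 * Re (cnj c * w))"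
    by (simp add: sum_lessThan_2 complex_eq_iff algebra_simps)
  show "trace_norm (ptrace_mult (kron (herm2 r0 r1 w) (ketbra 2 0 0)) (herm2 \<alpha> \<beta> c))
      = \<bar>\<alpha> * r0 + \<beta> * r1 + 2 * Re (cnj c * w)\<bar>"
    unfolding trace_norm_ptrace_mult_kron_ketbra0[OF herm2_carrier] sum norm_of_real ..
qed

lemma spec_rad2_attained:
  "\<exists>\<rho>. density 4 \<rho> \<and> trace_norm (ptrace_mult \<rho> (herm2 \<alpha> \<beta> c)) = spec_rad2 \<alpha> \<beta> (cmod c)"
proof -
  define s where "s = sqrt ((\<alpha> - \<beta>)^2 + 4 * (cmod c)^2)"
  have s: "0 \<le> s" "s^2 = (\<alpha> - \<beta>)^2 + 4 * (cmod c)^2" unfolding s_def by simp_all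
  have L: "spec_rad2 \<alpha> \<beta> (cmod c) = (\<bar>\<alpha> + \<beta>\<bar> + s) / 2" unfolding spec_rad2_def s_def ..
  show ?thesis
  proof (cases "s = 0")
    case True
    hence "\<alpha> = \<beta>" using s(2) by (simp add: add_nonneg_eq_0_iff)
    hence "spec_rad2 \<alpha> \<beta> (cmod c) = \<bar>\<alpha>\<bar>" unfolding L using True by simp
    thus ?thesis using trace_norm_ptrace_mult_herm2_attains[of 1 0 0 \<alpha> \<beta> c] by simp
  next
    case False
    hence "0 < s" using s(1) by simp
    txt \<open>\<open>herm2 r0 r1 w\<close> is the projection onto the eigenvector of \<open>herm2 \<alpha> \<beta> c\<close>
      for the eigenvalue \<open>(\<alpha> + \<beta> + \<sigma> s) / 2\<close>, whose sign is that of \<open>\<alpha> + \<beta>\<close>.\<close>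
    define \<sigma> :: real where "\<sigma> = (if 0 \<le> \<alpha> + \<beta> then 1 else -1)"
    define r0 where "r0 = (s + \<sigma> * (\<alpha> - \<beta>)) / (2 * s)"
    define r1 where "r1 = (s - \<sigma> * (\<alpha> - \<beta>)) / (2 * s)"
    define w where "w = of_real (\<sigma> / s) * c"
    have "\<bar>\<alpha> - \<beta>\<bar> \<le> s" unfolding s_def by (rule abs_le_sqrt_square_add) simp
    hence "0 \<le> r0" "0 \<le> r1"
      using \<open>0 < s\<close> unfolding r0_def r1_def \<sigma>_def by (auto simp: abs_le_iff)
    moreover have "r0 + r1 = 1" using \<open>0 < s\<close> unfolding r0_def r1_def by (simp add: field_simps)
    moreover have "(cmod w)^2 = r0 * r1"
    proof -
      have "cmod w = cmod c / s" "\<sigma> * \<sigma> = 1"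
        using \<open>0 < s\<close> unfolding w_def \<sigma>_def by (simp_all add: norm_mult norm_divide)
      thus ?thesis using \<open>0 < s\<close> s(2) unfolding r0_def r1_def
        by (simp add: field_simps power2_eq_square)
    qed
    moreover have "\<alpha> * r0 + \<beta> * r1 + 2 * Re (cnj c * w) = (\<alpha> + \<beta> + \<sigma> * s) / 2"
    proof -
      have q: "Re (cnj c * w) = \<sigma> * (cmod c)^2 / s"
        unfolding w_def by (simp add: mult.left_commute[of "cnj c"] cnj_mult_self)
      have "\<alpha> * r0 + \<beta> * r1 + 2 * (\<sigma> * (cmod c)^2 / s)
          = (\<alpha> + \<beta>) / 2 + \<sigma> * ((\<alpha> - \<beta>)^2 + 4 * (cmod c)^2) / (2 * s)"
        using \<open>0 < s\<close> unfolding r0_def r1_def by (simp add: field_simps power2_eq_square)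
      also have "\<dots> = (\<alpha> + \<beta> + \<sigma> * s) / 2"
        using \<open>0 < s\<close> unfolding s(2)[symmetric] by (simp add: field_simps power2_eq_square)
      finally show ?thesis unfolding q .
    qed
    ultimately show ?thesis
      using trace_norm_ptrace_mult_herm2_attains[of r0 r1 w \<alpha> \<beta> c] \<open>0 < s\<close> unfolding L \<sigma>_def
      by (auto split: if_splits)
  qed
qed

lemma det_herm2: "det (herm2 a b c) = of_real (a * b - (cmod c)^2)"
  unfolding det_2x2[OF herm2_carrier] herm2_index of_real_diff of_real_mult complex_norm_square ..

lemma trace_norm_herm2:
  "trace_norm (herm2 a b c) = sqrt (a^2 + b^2 + 2 * (cmod c)^2 + 2 * \<bar>a * b - (cmod c)^2\<bar>)"
  unfolding trace_norm_2x2[OF herm2_carrier] det_herm2 norm_of_real by simp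

lemma spec_rad2_eq_trace_norm_iff:
  "spec_rad2 \<alpha> \<beta> (cmod c) = trace_norm (herm2 \<alpha> \<beta> c) \<longleftrightarrow> det (herm2 \<alpha> \<beta> c) = 0"
proof -
  define \<delta> where "\<delta> = \<alpha> * \<beta> - (cmod c)^2"
  define t where "t = \<alpha> + \<beta>"
  define s where "s = sqrt ((\<alpha> - \<beta>)^2 + 4 * (cmod c)^2)"
  define T where "T = trace_norm (herm2 \<alpha> \<beta> c)"
  have "s^2 = (\<alpha> - \<beta>)^2 + 4 * (cmod c)^2" unfolding s_def by simp
  hence s: "0 \<le> s" "s^2 = t^2 - 4 * \<delta>"
    unfolding s_def t_def \<delta>_def by (simp_all add: power2_eq_square algebra_simps)
  have "T^2 = \<alpha>^2 + \<beta>^2 + 2 * (cmod c)^2 + 2 * \<bar>\<delta>\<bar>"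
    unfolding T_def trace_norm_herm2 \<delta>_def by (intro real_sqrt_pow2) simp
  moreover have "\<alpha>^2 + \<beta>^2 + 2 * (cmod c)^2 = t^2 - 2 * \<delta>"
    unfolding t_def \<delta>_def by (simp add: power2_eq_square algebra_simps)
  ultimately have "T^2 = t^2 - 2 * \<delta> + 2 * \<bar>\<delta>\<bar>" by simp
  moreover have "0 \<le> T" unfolding T_def trace_norm_herm2 by simp
  ultimately have T: "0 \<le> T" "T^2 = t^2 - 2 * \<delta> + 2 * \<bar>\<delta>\<bar>" by simp_all
  have "(\<bar>t\<bar> + s) / 2 = T \<longleftrightarrow> \<delta> = 0"
  proof (cases "0 < \<delta>")
    case True
    have "T^2 = \<bar>t\<bar>^2" using T(2) True by simp
    hence "T = \<bar>t\<bar>" using T(1) by (simp only: power2_eq_iff_nonneg abs_ge_zero)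
    moreover have "s^2 < \<bar>t\<bar>^2" using s(2) True by simp
    hence "s < \<bar>t\<bar>" by (rule power_less_imp_less_base) simp
    ultimately show ?thesis using True by simp
  next
    case False
    have "T^2 = s^2" using T(2) s(2) False by simp
    hence "T = s" using T(1) s(1) by simp
    moreover have "\<bar>t\<bar>^2 = s^2 \<longleftrightarrow> \<delta> = 0" using s(2) by simp
    hence "\<bar>t\<bar> = s \<longleftrightarrow> \<delta> = 0" using s(1) by (simp only: power2_eq_iff_nonneg abs_ge_zero)
    ultimately show ?thesis by auto
  qed
  thus ?thesis
    unfolding spec_rad2_def det_herm2 of_real_eq_0_iff
    unfolding \<delta>_def[symmetric] t_def[symmetric] s_def[symmetric] T_def[symmetric] .
qed

section \<open>Measurement channels\<close>

lemma ketbra_carrier [simp]: "ketbra n i j \<in> carrier_mat n n"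
  and dim_row_ketbra [simp]: "dim_row (ketbra n i j) = n"
  and dim_col_ketbra [simp]: "dim_col (ketbra n i j) = n"
  unfolding ketbra_def by auto

lemma index_ketbra [simp]: "k < n \<Longrightarrow> l < n \<Longrightarrow> ketbra n i j $$ (k,l) = (if k = i \<and> l = j then 1 else 0)"
  unfolding ketbra_def by simp

lemma index_tensor_id:
  assumes S: "\<And>i j. i < din \<Longrightarrow> j < din \<Longrightarrow> S (ketbra din i j) \<in> carrier_mat dout dout"
    and rs: "r < dout * k" "s < dout * k"
  shows "tensor_id S din dout k \<rho> $$ (r,s) = (\<Sum>i<din. \<Sum>j<din.
    \<rho> $$ (i * k + r mod k, j * k + s mod k) * S (ketbra din i j) $$ (r div k, s div k))"
proof -
  have "0 < k" using rs by (cases k) auto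
  txt \<open>The test on the inner summation index comes first, so that \<open>sum.delta\<close> applies.\<close>
  let ?t = "\<lambda>i j a b. if b = s mod k then if a = r mod k
    then \<rho> $$ (i * k + a, j * k + b) * S (ketbra din i j) $$ (r div k, s div k) else 0 else 0"
  have "tensor_id S din dout k \<rho> $$ (r,s) = (\<Sum>((i,j),(a,b)) \<in> ({..<din} \<times> {..<din}) \<times> ({..<k} \<times> {..<k}).
      (\<rho> $$ (i * k + a, j * k + b) \<cdot>\<^sub>m kron (S (ketbra din i j)) (ketbra k a b)) $$ (r,s))"
    unfolding tensor_id_def msum_def using rs by (simp add: case_prod_beta')
  also have "\<dots> = (\<Sum>((i,j),(a,b)) \<in> ({..<din} \<times> {..<din}) \<times> ({..<k} \<times> {..<k}). ?t i j a b)"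
  proof (intro sum.cong refl, clarify)
    fix i j a b assume "i < din" "j < din"
    hence "dim_row (S (ketbra din i j)) = dout" "dim_col (S (ketbra din i j)) = dout" using S by auto
    thus "(\<rho> $$ (i * k + a, j * k + b) \<cdot>\<^sub>m kron (S (ketbra din i j)) (ketbra k a b)) $$ (r,s) = ?t i j a b"
      using rs \<open>0 < k\<close> by (auto simp: kron_def)
  qed
  also have "\<dots> = (\<Sum>(i,j) \<in> {..<din} \<times> {..<din}. \<Sum>(a,b) \<in> {..<k} \<times> {..<k}. ?t i j a b)"
    by (simp add: sum.cartesian_product split_def)
  also have "\<dots> = (\<Sum>(i,j) \<in> {..<din} \<times> {..<din}.
      \<rho> $$ (i * k + r mod k, j * k + s mod k) * S (ketbra din i j) $$ (r div k, s div k))"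
    using \<open>0 < k\<close> by (intro sum.cong refl) (auto simp: sum.cartesian_product')
  finally show ?thesis by (simp add: sum.cartesian_product')
qed

lemma index_choi:
  assumes S: "\<And>i j. i < d \<Longrightarrow> j < d \<Longrightarrow> S (ketbra d i j) \<in> carrier_mat dout dout"
    and rs: "r < dout * d" "s < dout * d"
  shows "choi S d dout $$ (r,s) = S (ketbra d (r mod d) (s mod d)) $$ (r div d, s div d)"
proof -
  have "0 < d" using rs by (cases d) auto
  let ?t = "\<lambda>i j. if j = s mod d then if i = r mod d then S (ketbra d i j) $$ (r div d, s div d) else 0 else 0"
  have "choi S d dout $$ (r,s) = (\<Sum>(i,j) \<in> {..<d} \<times> {..<d}. kron (S (ketbra d i j)) (ketbra d i j) $$ (r,s))"
    unfolding choi_def msum_def using rs by (simp add: case_prod_beta')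
  also have "\<dots> = (\<Sum>(i,j) \<in> {..<d} \<times> {..<d}. ?t i j)"
  proof (intro sum.cong refl, clarify)
    fix i j assume "i < d" "j < d"
    hence "dim_row (S (ketbra d i j)) = dout" "dim_col (S (ketbra d i j)) = dout" using S by auto
    thus "kron (S (ketbra d i j)) (ketbra d i j) $$ (r,s) = ?t i j"
      using rs \<open>0 < d\<close> by (auto simp: kron_def)
  qed
  finally show ?thesis using \<open>0 < d\<close> by (simp add: sum.cartesian_product')
qed

lemma trace_ketbra_mult:
  assumes "A \<in> carrier_mat d d" "i < d" "j < d"
  shows "trace (ketbra d i j * A) = A $$ (j,i)"
proof -
  have "row (ketbra d i j) a = (if a = i then unit_vec d j else 0\<^sub>v d)" if "a < d" for a
    using that by (intro eq_vecI) (auto simp: ketbra_def unit_vec_def)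
  hence "(ketbra d i j * A) $$ (a,a) = (if a = i then A $$ (j,i) else 0)" if "a < d" for a
    using assms that by auto
  hence "trace (ketbra d i j * A) = (\<Sum>a<d. if a = i then A $$ (j,i) else 0)"
    unfolding trace_def by simp
  thus ?thesis using assms by simp
qed

lemma meas_channel_ketbra:
  assumes M: "\<And>p. p < m \<Longrightarrow> M p \<in> carrier_mat d d" and ij: "i < d" "j < d"
  shows "meas_channel m M (ketbra d i j) = mat m m (\<lambda>(p,q). if p = q then M p $$ (j,i) else 0)"
proof -
  have "(trace (ketbra d i j * M p) \<cdot>\<^sub>m ketbra m p p) $$ (r,s) = (if p = r then if r = s then M p $$ (j,i) else 0 else 0)"
    if "p < m" "r < m" "s < m" for p r s
    using that M ij by (auto simp: trace_ketbra_mult)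
  thus ?thesis unfolding meas_channel_def msum_def by (intro eq_matI) auto
qed

lemma is_povm_carrier_hermitian:
  assumes "is_povm d m M" "p < m"
  shows "M p \<in> carrier_mat d d" "hermitian (M p)"
  using assms unfolding is_povm_def psd_def by auto

lemma is_povm_diff_hermitian:
  assumes "is_povm d m M" "is_povm d m N" "0 < m"
  shows "M 0 - N 0 \<in> carrier_mat d d" "hermitian (M 0 - N 0)"
  using is_povm_carrier_hermitian[OF assms(1,3)] is_povm_carrier_hermitian[OF assms(2,3)]
  by (auto intro: hermitian_minus)

lemma is_povm_2_complement:
  assumes "is_povm d 2 M"
  shows "M 1 = 1\<^sub>m d - M 0"
proof -
  have "M 0 \<in> carrier_mat d d" "M 1 \<in> carrier_mat d d" using is_povm_carrier_hermitian[OF assms] by auto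
  moreover have "M 0 $$ (i,j) + M 1 $$ (i,j) = 1\<^sub>m d $$ (i,j)" if "i < d" "j < d" for i j
  proof -
    have "msum d d M {..<2} = 1\<^sub>m d" using assms unfolding is_povm_def by blast
    hence "msum d d M {..<2} $$ (i,j) = 1\<^sub>m d $$ (i,j)" by simp
    thus ?thesis using that by (simp add: msum_def sum_lessThan_2)
  qed
  ultimately show ?thesis by (intro eq_matI) (auto simp: eq_diff_eq add.commute)
qed

lemma delta_channel_ketbra:
  assumes M: "is_povm d 2 M" and N: "is_povm d 2 N" and ij: "i < d" "j < d"
  shows "delta_channel 2 M N (ketbra d i j)
    = mat 2 2 (\<lambda>(p,q). if p = q then (if p = 0 then 1 else -1) * (M 0 - N 0) $$ (j,i) else 0)"
proof -
  have carrier: "\<And>p. p < 2 \<Longrightarrow> M p \<in> carrier_mat d d" "\<And>p. p < 2 \<Longrightarrow> N p \<in> carrier_mat d d"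
    using is_povm_carrier_hermitian(1) M N by auto
  have "M 0 \<in> carrier_mat d d" "N 0 \<in> carrier_mat d d" using carrier by auto
  with ij show ?thesis unfolding delta_channel_def
    by (simp add: meas_channel_ketbra[OF carrier(1) ij] meas_channel_ketbra[OF carrier(2) ij])
       (intro eq_matI, auto dest!: less_2_cases
        simp: is_povm_2_complement[OF M, unfolded One_nat_def] is_povm_2_complement[OF N, unfolded One_nat_def])
qed

lemma tensor_id_delta_channel:
  assumes M: "is_povm 2 2 M" and N: "is_povm 2 2 N"
  shows "tensor_id (delta_channel 2 M N) 2 2 2 \<rho>
    = four_block_mat (ptrace_mult \<rho> (M 0 - N 0)) (0\<^sub>m 2 2) (0\<^sub>m 2 2) (- ptrace_mult \<rho> (M 0 - N 0))"
    (is "_ = four_block_mat ?Y _ _ _")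
proof (rule eq_matI)
  have D: "M 0 - N 0 \<in> carrier_mat 2 2" using is_povm_diff_hermitian(1)[OF M N] by simp
  fix r s assume "r < dim_row (four_block_mat ?Y (0\<^sub>m 2 2) (0\<^sub>m 2 2) (- ?Y))"
    "s < dim_col (four_block_mat ?Y (0\<^sub>m 2 2) (0\<^sub>m 2 2) (- ?Y))"
  hence rs: "r < 2 * 2" "s < 2 * 2" by auto
  have "tensor_id (delta_channel 2 M N) 2 2 2 \<rho> $$ (r,s) = (\<Sum>i<2. \<Sum>j<2. \<rho> $$ (i * 2 + r mod 2, j * 2 + s mod 2)
    * (if r div 2 = s div 2 then (if r div 2 = 0 then 1 else -1) * (M 0 - N 0) $$ (j,i) else 0))"
    using rs by (simp add: index_tensor_id delta_channel_ketbra[OF M N])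
  also have "\<dots> = four_block_mat ?Y (0\<^sub>m 2 2) (0\<^sub>m 2 2) (- ?Y) $$ (r,s)"
    using rs D less_4_cases[of r] less_4_cases[of s]
    by (auto simp: ptrace_mult_def sum_lessThan_2 algebra_simps)
  finally show "tensor_id (delta_channel 2 M N) 2 2 2 \<rho> $$ (r,s) = four_block_mat ?Y (0\<^sub>m 2 2) (0\<^sub>m 2 2) (- ?Y) $$ (r,s)" .
qed (auto simp: tensor_id_def msum_def)

lemma choi_delta_channel:
  assumes M: "is_povm 2 2 M" and N: "is_povm 2 2 N"
  shows "choi (delta_channel 2 M N) 2 2
    = four_block_mat (transpose_mat (M 0 - N 0)) (0\<^sub>m 2 2) (0\<^sub>m 2 2) (- transpose_mat (M 0 - N 0))"
    (is "_ = four_block_mat ?Y _ _ _")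
proof (rule eq_matI)
  have D: "M 0 - N 0 \<in> carrier_mat 2 2" using is_povm_diff_hermitian(1)[OF M N] by simp
  fix r s assume "r < dim_row (four_block_mat ?Y (0\<^sub>m 2 2) (0\<^sub>m 2 2) (- ?Y))"
    "s < dim_col (four_block_mat ?Y (0\<^sub>m 2 2) (0\<^sub>m 2 2) (- ?Y))"
  hence rs: "r < 2 * 2" "s < 2 * 2" using D by auto
  hence "r < 4" "s < 4" by simp_all
  have S: "delta_channel 2 M N (ketbra 2 i j) \<in> carrier_mat 2 2" if "i < 2" "j < 2" for i j
    using that by (simp add: delta_channel_ketbra[OF M N])
  have "choi (delta_channel 2 M N) 2 2 $$ (r,s)
      = (if r div 2 = s div 2 then (if r div 2 = 0 then 1 else -1) * (M 0 - N 0) $$ (s mod 2, r mod 2) else 0)"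
    using rs by (simp add: index_choi[where S = "delta_channel 2 M N", OF S rs] delta_channel_ketbra[OF M N])
  also have "\<dots> = four_block_mat ?Y (0\<^sub>m 2 2) (0\<^sub>m 2 2) (- ?Y) $$ (r,s)"
    using less_4_cases[OF \<open>r < 4\<close>] less_4_cases[OF \<open>s < 4\<close>] carrier_matD[OF D] by (elim disjE) simp_all
  finally show "choi (delta_channel 2 M N) 2 2 $$ (r,s) = four_block_mat ?Y (0\<^sub>m 2 2) (0\<^sub>m 2 2) (- ?Y) $$ (r,s)" .
qed (use is_povm_diff_hermitian(1)[OF M N] in \<open>auto simp: choi_def msum_def\<close>)

lemma trace_norm_four_block_uminus:
  assumes "(Y :: complex mat) \<in> carrier_mat n n"
  shows "trace_norm (four_block_mat Y (0\<^sub>m n n) (0\<^sub>m n n) (- Y)) = 2 * trace_norm Y"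
  using assms by (simp add: trace_norm_four_block_diag trace_norm_uminus)

lemma diamond_norm_delta_channel:
  assumes M: "is_povm 2 2 M" and N: "is_povm 2 2 N" and D: "M 0 - N 0 = herm2 \<alpha> \<beta> c"
  shows "diamond_norm (delta_channel 2 M N) 2 2 = 2 * spec_rad2 \<alpha> \<beta> (cmod c)"
proof -
  have "{trace_norm (tensor_id (delta_channel 2 M N) 2 2 2 \<rho>) | \<rho>. density (2 * 2) \<rho>}
      = {2 * trace_norm (ptrace_mult \<rho> (herm2 \<alpha> \<beta> c)) | \<rho>. density 4 \<rho>}"
    unfolding tensor_id_delta_channel[OF M N] D by (simp add: trace_norm_four_block_uminus)
  also have "Sup \<dots> = 2 * spec_rad2 \<alpha> \<beta> (cmod c)"
  proof (rule cSup_eq_maximum)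
    show "2 * spec_rad2 \<alpha> \<beta> (cmod c) \<in> {2 * trace_norm (ptrace_mult \<rho> (herm2 \<alpha> \<beta> c)) | \<rho>. density 4 \<rho>}"
      using spec_rad2_attained[of \<alpha> \<beta> c] by force
    show "x \<le> 2 * spec_rad2 \<alpha> \<beta> (cmod c)"
      if "x \<in> {2 * trace_norm (ptrace_mult \<rho> (herm2 \<alpha> \<beta> c)) | \<rho>. density 4 \<rho>}" for x
      using that trace_norm_ptrace_mult_le_spec_rad2 by force
  qed
  finally show ?thesis unfolding diamond_norm_def .
qed

lemma me_norm_delta_channel:
  assumes M: "is_povm 2 2 M" and N: "is_povm 2 2 N" and D: "M 0 - N 0 = herm2 \<alpha> \<beta> c"
  shows "me_norm (delta_channel 2 M N) 2 2 = trace_norm (herm2 \<alpha> \<beta> c)"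
proof -
  define Y where "Y = (1 / of_nat 2) \<cdot>\<^sub>m transpose_mat (M 0 - N 0)"
  have "Y = herm2 (\<alpha> / 2) (\<beta> / 2) (cnj c / 2)"
    unfolding Y_def D by (intro eq_matI) (auto simp: herm2_def)
  moreover have "(1 / of_nat 2) \<cdot>\<^sub>m choi (delta_channel 2 M N) 2 2 = four_block_mat Y (0\<^sub>m 2 2) (0\<^sub>m 2 2) (- Y)"
    unfolding choi_delta_channel[OF M N] Y_def D by (intro eq_matI) auto
  ultimately have "me_norm (delta_channel 2 M N) 2 2 = 2 * trace_norm (herm2 (\<alpha> / 2) (\<beta> / 2) (cnj c / 2))"
    unfolding me_norm_def by (simp add: trace_norm_four_block_uminus)
  also have "\<dots> = trace_norm (herm2 \<alpha> \<beta> c)"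
  proof -
    have "\<alpha> / 2 * (\<beta> / 2) - (cmod (cnj c / 2))^2 = (\<alpha> * \<beta> - (cmod c)^2) / 4"
      by (simp add: norm_divide power_divide field_simps)
    hence "(\<alpha> / 2)^2 + (\<beta> / 2)^2 + 2 * (cmod (cnj c / 2))^2 + 2 * \<bar>\<alpha> / 2 * (\<beta> / 2) - (cmod (cnj c / 2))^2\<bar>
        = (\<alpha>^2 + \<beta>^2 + 2 * (cmod c)^2 + 2 * \<bar>\<alpha> * \<beta> - (cmod c)^2\<bar>) / 4"
      by (simp add: norm_divide power_divide field_simps)
    thus ?thesis unfolding trace_norm_herm2 by (simp only: real_sqrt_divide) simp
  qed
  finally show ?thesis .
qed

theorem corollary2:
  fixes M N :: "nat \<Rightarrow> complex mat"
  assumes "is_povm 2 2 M" and "is_povm 2 2 N" and "M 1 \<noteq> N 1"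
  shows "MEWC 2 2 M N \<longleftrightarrow> det (M 0 - N 0) = 0"
proof -
  have "M 0 - N 0 \<in> carrier_mat 2 2" "hermitian (M 0 - N 0)"
    using is_povm_diff_hermitian[OF assms(1,2)] by simp_all
  then obtain \<alpha> \<beta> c where D: "M 0 - N 0 = herm2 \<alpha> \<beta> c"
    using hermitian_2x2_eq_herm2 by blast
  have "MEWC 2 2 M N \<longleftrightarrow> spec_rad2 \<alpha> \<beta> (cmod c) = trace_norm (herm2 \<alpha> \<beta> c)"
    unfolding MEWC_def diamond_norm_delta_channel[OF assms(1,2) D] me_norm_delta_channel[OF assms(1,2) D]
    by simp
  also have "\<dots> \<longleftrightarrow> det (M 0 - N 0) = 0"
    unfolding D by (rule spec_rad2_eq_trace_norm_iff)
  finally show ?thesis .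
qed

end
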